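(* Over a field of characteristic $0$: the identity $[x_1,x_3\circ x_2]\circ x_4+([x_3,x_1]\circ x_2)\circ x_4=[x_1,(x_3\circ x_4)\circ x_2]+[x_3\circ x_4,x_1]\circ x_2$ ( * ) holds in every differential Poisson algebra $(V,\cdot,\{\cdot,\cdot\},d)$ with respect to $[u,v]=\{u,v\}$ and $u\circ v=u\,d(v)$ (hence on all special GD-algebras), but there exists a GD-algebra on which ( * ) does not hold.
   Context: A differential Poisson algebra is a Poisson algebra (associative commutative product, Lie bracket $\{\cdot,\cdot\}$, Leibniz rule $\{x,yz\}=\{x,y\}z+y\{x,z\}$) with a linear map $d$ which is a derivation of both operations. A GD-algebra is a system $(A,\circ,[\cdot,\cdot])$ such that $(a\circ b)\circ c-a\circ(b\circ c)=(b\circ a)\circ c-b\circ(a\circ c)$, $(a\circ b)\circ c=(a\circ c)\circ b$, $(A,[\cdot,\cdot])$ is a Lie algebra, and $[a,b\circ c]-[c,b\circ a]+[b,a]\circ c-[b,c]\circ a-b\circ[a,c]=0$. *)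

theory Defs
  imports Main "HOL-Library.Function_Algebras"
begin

definition vspace_on :: "('k::field \<Rightarrow> 'v::ab_group_add \<Rightarrow> 'v) \<Rightarrow> 'v set \<Rightarrow> bool" where
  "vspace_on s V \<longleftrightarrow>
     0 \<in> V \<and> (\<forall>x\<in>V. \<forall>y\<in>V. x + y \<in> V) \<and> (\<forall>x\<in>V. - x \<in> V) \<and>
     (\<forall>a. \<forall>x\<in>V. s a x \<in> V) \<and>
     (\<forall>a. \<forall>x\<in>V. \<forall>y\<in>V. s a (x + y) = s a x + s a y) \<and>
     (\<forall>a b. \<forall>x\<in>V. s (a + b) x = s a x + s b x) \<and>
     (\<forall>a b. \<forall>x\<in>V. s a (s b x) = s (a * b) x) \<and>
     (\<forall>x\<in>V. s 1 x = x)"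

definition linear_on :: "('k::field \<Rightarrow> 'v::ab_group_add \<Rightarrow> 'v) \<Rightarrow> 'v set \<Rightarrow> ('v \<Rightarrow> 'v) \<Rightarrow> bool" where
  "linear_on s V f \<longleftrightarrow>
     (\<forall>x\<in>V. f x \<in> V) \<and>
     (\<forall>x\<in>V. \<forall>y\<in>V. f (x + y) = f x + f y) \<and>
     (\<forall>a. \<forall>x\<in>V. f (s a x) = s a (f x))"

definition bilinear_on :: "('k::field \<Rightarrow> 'v::ab_group_add \<Rightarrow> 'v) \<Rightarrow> 'v set \<Rightarrow> ('v \<Rightarrow> 'v \<Rightarrow> 'v) \<Rightarrow> bool" where
  "bilinear_on s V m \<longleftrightarrow>
     (\<forall>x\<in>V. \<forall>y\<in>V. m x y \<in> V) \<and>
     (\<forall>x\<in>V. \<forall>y\<in>V. \<forall>z\<in>V. m (x + y) z = m x z + m y z) \<and>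
     (\<forall>x\<in>V. \<forall>y\<in>V. \<forall>z\<in>V. m x (y + z) = m x y + m x z) \<and>
     (\<forall>a. \<forall>x\<in>V. \<forall>y\<in>V. m (s a x) y = s a (m x y)) \<and>
     (\<forall>a. \<forall>x\<in>V. \<forall>y\<in>V. m x (s a y) = s a (m x y))"

definition lie_algebra_on :: "('k::field \<Rightarrow> 'v::ab_group_add \<Rightarrow> 'v) \<Rightarrow> 'v set \<Rightarrow> ('v \<Rightarrow> 'v \<Rightarrow> 'v) \<Rightarrow> bool" where
  "lie_algebra_on s V br \<longleftrightarrow>
     vspace_on s V \<and> bilinear_on s V br \<and>
     (\<forall>x\<in>V. br x x = 0) \<and>
     (\<forall>x\<in>V. \<forall>y\<in>V. \<forall>z\<in>V. br x (br y z) + br y (br z x) + br z (br x y) = 0)"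

definition diff_poisson_algebra_on ::
  "('k::field \<Rightarrow> 'v::ab_group_add \<Rightarrow> 'v) \<Rightarrow> 'v set \<Rightarrow> ('v \<Rightarrow> 'v \<Rightarrow> 'v) \<Rightarrow> ('v \<Rightarrow> 'v \<Rightarrow> 'v) \<Rightarrow> ('v \<Rightarrow> 'v) \<Rightarrow> bool" where
  "diff_poisson_algebra_on s V mul br d \<longleftrightarrow>
     vspace_on s V \<and> bilinear_on s V mul \<and> lie_algebra_on s V br \<and> linear_on s V d \<and>
     (\<forall>x\<in>V. \<forall>y\<in>V. mul x y = mul y x) \<and>
     (\<forall>x\<in>V. \<forall>y\<in>V. \<forall>z\<in>V. mul (mul x y) z = mul x (mul y z)) \<and>
     (\<forall>x\<in>V. \<forall>y\<in>V. \<forall>z\<in>V. br x (mul y z) = mul (br x y) z + mul y (br x z)) \<and>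
     (\<forall>x\<in>V. \<forall>y\<in>V. d (mul x y) = mul (d x) y + mul x (d y)) \<and>
     (\<forall>x\<in>V. \<forall>y\<in>V. d (br x y) = br (d x) y + br x (d y))"

definition gd_algebra_on ::
  "('k::field \<Rightarrow> 'v::ab_group_add \<Rightarrow> 'v) \<Rightarrow> 'v set \<Rightarrow> ('v \<Rightarrow> 'v \<Rightarrow> 'v) \<Rightarrow> ('v \<Rightarrow> 'v \<Rightarrow> 'v) \<Rightarrow> bool" where
  "gd_algebra_on s V circ br \<longleftrightarrow>
     vspace_on s V \<and> bilinear_on s V circ \<and> lie_algebra_on s V br \<and>
     (\<forall>a\<in>V. \<forall>b\<in>V. \<forall>c\<in>V.
        circ (circ a b) c - circ a (circ b c) = circ (circ b a) c - circ b (circ a c)) \<and>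
     (\<forall>a\<in>V. \<forall>b\<in>V. \<forall>c\<in>V. circ (circ a b) c = circ (circ a c) b) \<and>
     (\<forall>a\<in>V. \<forall>b\<in>V. \<forall>c\<in>V.
        br a (circ b c) - br c (circ b a) + circ (br b a) c - circ (br b c) a - circ b (br a c) = 0)"

definition identity_star :: "('v::ab_group_add \<Rightarrow> 'v \<Rightarrow> 'v) \<Rightarrow> ('v \<Rightarrow> 'v \<Rightarrow> 'v) \<Rightarrow> 'v \<Rightarrow> 'v \<Rightarrow> 'v \<Rightarrow> 'v \<Rightarrow> bool" where
  "identity_star circ br x1 x2 x3 x4 \<longleftrightarrow>
     circ (br x1 (circ x3 x2)) x4 + circ (circ (br x3 x1) x2) x4
     = br x1 (circ (circ x3 x4) x2) + circ (br (circ x3 x4) x1) x2"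

end

theory Submission
  imports Defs
begin

text \<open>In a Poisson algebra the Leibniz rule and antisymmetry give
  \<open>{a, y p} + {y, a} p = y {a, p}\<close>. Applied twice, with \<open>p = d x\<^sub>2\<close>, \<open>q = d x\<^sub>4\<close>, it shows
  that both sides of (*) equal \<open>(x\<^sub>3 q) {x\<^sub>1, p}\<close>.
  The identity is not a consequence of the GD-axioms: it fails in a three-dimensional
  GD-algebra with basis \<open>e\<^sub>0, e\<^sub>1, e\<^sub>2\<close>.\<close>

definition poisson_algebra_on ::
  "('k::field \<Rightarrow> 'v::ab_group_add \<Rightarrow> 'v) \<Rightarrow> 'v set \<Rightarrow> ('v \<Rightarrow> 'v \<Rightarrow> 'v) \<Rightarrow> ('v \<Rightarrow> 'v \<Rightarrow> 'v) \<Rightarrow> bool" where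
  "poisson_algebra_on s V mul br \<longleftrightarrow>
     vspace_on s V \<and> bilinear_on s V mul \<and> lie_algebra_on s V br \<and>
     (\<forall>x\<in>V. \<forall>y\<in>V. mul x y = mul y x) \<and>
     (\<forall>x\<in>V. \<forall>y\<in>V. \<forall>z\<in>V. mul (mul x y) z = mul x (mul y z)) \<and>
     (\<forall>x\<in>V. \<forall>y\<in>V. \<forall>z\<in>V. br x (mul y z) = mul (br x y) z + mul y (br x z))"

lemma diff_poisson_algebra_on_imp_poisson_algebra_on:
  "diff_poisson_algebra_on s V mul br d \<Longrightarrow> poisson_algebra_on s V mul br"
  by (simp add: diff_poisson_algebra_on_def poisson_algebra_on_def)

lemma bilinear_on_minus_left:
  assumes "vspace_on s V" "bilinear_on s V m" "x \<in> V" "y \<in> V"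
  shows "m (- x) y = - m x y"
proof -
  have add: "\<And>u v. u \<in> V \<Longrightarrow> v \<in> V \<Longrightarrow> m (u + v) y = m u y + m v y"
    and "0 \<in> V" "- x \<in> V"
    using assms by (auto simp: vspace_on_def bilinear_on_def)
  have "m 0 y = 0"
    using add[of 0 0] \<open>0 \<in> V\<close> by simp
  moreover have "m (x + - x) y = m x y + m (- x) y"
    using add \<open>- x \<in> V\<close> \<open>x \<in> V\<close> by blast
  ultimately show ?thesis by (simp add: eq_neg_iff_add_eq_0 add.commute)
qed

lemma lie_algebra_on_anticomm:
  assumes "lie_algebra_on s V br" "x \<in> V" "y \<in> V"
  shows "br x y = - br y x"
proof -
  have "x + y \<in> V" and alt: "\<And>u. u \<in> V \<Longrightarrow> br u u = 0"
    and add1: "\<And>u v w. u \<in> V \<Longrightarrow> v \<in> V \<Longrightarrow> w \<in> V \<Longrightarrow> br (u + v) w = br u w + br v w"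
    and add2: "\<And>u v w. u \<in> V \<Longrightarrow> v \<in> V \<Longrightarrow> w \<in> V \<Longrightarrow> br u (v + w) = br u v + br u w"
    using assms by (auto simp: lie_algebra_on_def vspace_on_def bilinear_on_def)
  have "0 = br (x + y) (x + y)"
    using alt \<open>x + y \<in> V\<close> by simp
  also have "\<dots> = (br x x + br x y) + (br y x + br y y)"
    using add1 add2 assms \<open>x + y \<in> V\<close> by simp
  also have "\<dots> = br x y + br y x"
    using alt assms by simp
  finally show ?thesis
    by (simp add: eq_neg_iff_add_eq_0)
qed

lemma poisson_bracket_mul_right:
  assumes P: "poisson_algebra_on s V mul br" and "a \<in> V" "y \<in> V" "p \<in> V"
  shows "br a (mul y p) + mul (br y a) p = mul y (br a p)"
proof -
  have V: "vspace_on s V" "bilinear_on s V mul" and L: "lie_algebra_on s V br"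
    using P by (auto simp: poisson_algebra_on_def)
  have anti: "br y a = - br a y"
    using lie_algebra_on_anticomm[OF L] assms by blast
  have "br a y \<in> V"
    using L assms by (simp add: lie_algebra_on_def bilinear_on_def)
  then have "mul (br y a) p = - mul (br a y) p"
    using anti bilinear_on_minus_left[OF V] \<open>p \<in> V\<close> by simp
  moreover have "br a (mul y p) = mul (br a y) p + mul y (br a p)"
    using P assms unfolding poisson_algebra_on_def by blast
  ultimately show ?thesis by simp
qed

lemma poisson_algebra_on_identity_star:
  assumes P: "poisson_algebra_on s V mul br"
    and x: "x1 \<in> V" "x3 \<in> V" and pq: "f x2 \<in> V" "f x4 \<in> V"
  shows "identity_star (\<lambda>u v. mul u (f v)) br x1 x2 x3 x4"
proof -
  define p q where "p = f x2" and "q = f x4"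
  note pq = pq[folded p_def q_def]
  have B: "bilinear_on s V mul" "lie_algebra_on s V br"
    and comm: "\<And>x y. x \<in> V \<Longrightarrow> y \<in> V \<Longrightarrow> mul x y = mul y x"
    and assoc: "\<And>x y z. x \<in> V \<Longrightarrow> y \<in> V \<Longrightarrow> z \<in> V \<Longrightarrow> mul (mul x y) z = mul x (mul y z)"
    using P by (auto simp: poisson_algebra_on_def)
  have inV: "mul x3 p \<in> V" "mul x3 q \<in> V" "br x3 x1 \<in> V" "br x1 p \<in> V"
    "br x1 (mul x3 p) \<in> V" "mul (br x3 x1) p \<in> V"
    using B x pq by (auto simp: bilinear_on_def lie_algebra_on_def)
  have "mul (br x1 (mul x3 p)) q + mul (mul (br x3 x1) p) q
        = mul (br x1 (mul x3 p) + mul (br x3 x1) p) q"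
    using B inV pq by (simp add: bilinear_on_def)
  also have "\<dots> = mul (mul x3 (br x1 p)) q"
    using poisson_bracket_mul_right[OF P] x pq by simp
  also have "\<dots> = mul (mul x3 q) (br x1 p)"
    using assoc comm inV x pq by metis
  also have "\<dots> = br x1 (mul (mul x3 q) p) + mul (br (mul x3 q) x1) p"
    using poisson_bracket_mul_right[OF P] x pq inV by simp
  finally show ?thesis
    unfolding identity_star_def p_def q_def .
qed

lemma diff_poisson_algebra_on_identity_star:
  assumes D: "diff_poisson_algebra_on s V mul br d" and "x1 \<in> V" "x2 \<in> V" "x3 \<in> V" "x4 \<in> V"
  shows "identity_star (\<lambda>u v. mul u (d v)) br x1 x2 x3 x4"
proof -
  have "d x2 \<in> V" "d x4 \<in> V"
    using D assms by (auto simp: diff_poisson_algebra_on_def linear_on_def)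
  then show ?thesis
    using poisson_algebra_on_identity_star diff_poisson_algebra_on_imp_poisson_algebra_on D assms
    by blast
qed

text \<open>Coordinates \<open>0, 1, 2\<close> span the algebra; all others are annihilated by both products.
  On the basis: \<open>e\<^sub>0 \<circ> e\<^sub>0 = e\<^sub>2\<close>, \<open>e\<^sub>2 \<circ> e\<^sub>0 = e\<^sub>1\<close>, \<open>[e\<^sub>0, e\<^sub>1] = e\<^sub>1\<close>, all other products zero.
  At \<open>x\<^sub>1 = \<dots> = x\<^sub>4 = e\<^sub>0\<close> the left side of (*) is \<open>0\<close> and the right side is \<open>e\<^sub>1\<close>.\<close>

definition gd_cex_circ :: "(nat \<Rightarrow> 'k::field) \<Rightarrow> (nat \<Rightarrow> 'k) \<Rightarrow> nat \<Rightarrow> 'k" where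
  "gd_cex_circ f g = (\<lambda>n. if n = 1 then f 2 * g 0 else if n = 2 then f 0 * g 0 else 0)"

definition gd_cex_br :: "(nat \<Rightarrow> 'k::field) \<Rightarrow> (nat \<Rightarrow> 'k) \<Rightarrow> nat \<Rightarrow> 'k" where
  "gd_cex_br f g = (\<lambda>n. if n = 1 then f 0 * g 1 - f 1 * g 0 else 0)"

lemma gd_algebra_on_cex:
  "gd_algebra_on (\<lambda>a f n. a * f n) (UNIV :: (nat \<Rightarrow> 'k::field) set) gd_cex_circ gd_cex_br"
  unfolding gd_algebra_on_def vspace_on_def bilinear_on_def lie_algebra_on_def
  by (auto simp: fun_eq_iff gd_cex_circ_def gd_cex_br_def algebra_simps)

lemma not_identity_star_cex:
  fixes e0 :: "nat \<Rightarrow> 'k::field"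
  defines "e0 \<equiv> \<lambda>n. if n = 0 then 1 else 0"
  shows "\<not> identity_star gd_cex_circ gd_cex_br e0 e0 e0 e0"
proof
  assume "identity_star gd_cex_circ gd_cex_br e0 e0 e0 e0"
  from fun_cong[OF this[unfolded identity_star_def], of 1] show False
    by (simp add: gd_cex_circ_def gd_cex_br_def e0_def)
qed

theorem mainTheorem19:
  fixes s :: "'k::field_char_0 \<Rightarrow> 'v::ab_group_add \<Rightarrow> 'v"
  shows "(\<forall>V mul br d. diff_poisson_algebra_on s V mul br d \<longrightarrow>
            (\<forall>x1\<in>V. \<forall>x2\<in>V. \<forall>x3\<in>V. \<forall>x4\<in>V.
               identity_star (\<lambda>u v. mul u (d v)) br x1 x2 x3 x4))
       \<and> (\<exists>(V :: (nat \<Rightarrow> 'k) set) circ br.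
            gd_algebra_on (\<lambda>a f. (\<lambda>n. a * f n)) V circ br \<and>
            \<not> (\<forall>x1\<in>V. \<forall>x2\<in>V. \<forall>x3\<in>V. \<forall>x4\<in>V. identity_star circ br x1 x2 x3 x4))"
  using diff_poisson_algebra_on_identity_star gd_algebra_on_cex not_identity_star_cex
  by blast

end
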